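(* There is an absolute constant $C>0$ such that for every $n\ge 1$ and every unweighted congestion game $\mathcal{G}$ with $n$ players and affine latency functions, $\mathrm{PoA}_{\max}(\mathcal{G})\le C\sqrt{n}$; that is, $\mathrm{PoA}_{\max}(\mathcal{G})=O(\sqrt{n})$.
   Context: A weighted congestion game consists of a finite set $[n]=\{1,\dots,n\}$ of players, a finite set $E$ of resources, for each player $i$ a weight $w_i>0$ and a nonempty finite strategy set $\Sigma_i\subseteq 2^E$, and for each resource $e$ a latency function $\ell_e:\mathbb{R}_{\ge 0}\to\mathbb{R}_{\ge 0}$. It is unweighted if $w_i=1$ for all $i$. Affine latency functions means $\ell_e(x)=\alpha_e x+\beta_e$ with $\alpha_e,\beta_e\ge 0$. For a strategy profile $S=(s_1,\dots,s_n)$, the congestion of $e$ is $L_e(S)=\sum_{i:\,e\in s_i}w_i$ and the cost of player $i$ is $c_i(S)=\sum_{e\in s_i}\ell_e(L_e(S))$. The maximum social cost is $\mathrm{MAX}(S)=\max_{i\in[n]}c_i(S)$. A pure Nash equilibrium (PNE) is a profile $S$ with $c_i(S)\le c_i(S_{-i}\diamond t)$ for all $i$ and $t\in\Sigma_i$, where $(S_{-i}\diamond t)$ replaces $s_i$ by $t$. $\mathrm{PoA}_{\max}(\mathcal{G})=\max_{S\ \mathrm{PNE}}\mathrm{MAX}(S)/\min_{S'}\mathrm{MAX}(S')$. *)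

theory Defs
  imports Complex_Main
begin

(* Unweighted congestion game with players {0..<n}, resource set E,
   strategy sets Sig i (i < n), affine latencies l_e(x) = alpha e * x + beta e. *)

definition valid_game :: "nat \<Rightarrow> 'e set \<Rightarrow> (nat \<Rightarrow> 'e set set) \<Rightarrow> ('e \<Rightarrow> real) \<Rightarrow> ('e \<Rightarrow> real) \<Rightarrow> bool" where
  "valid_game n E Sig alpha beta \<longleftrightarrow>
     finite E \<and>
     (\<forall>i<n. finite (Sig i) \<and> Sig i \<noteq> {} \<and> (\<forall>s\<in>Sig i. s \<subseteq> E)) \<and>
     (\<forall>e\<in>E. alpha e \<ge> 0 \<and> beta e \<ge> 0)"

definition is_profile :: "nat \<Rightarrow> (nat \<Rightarrow> 'e set set) \<Rightarrow> (nat \<Rightarrow> 'e set) \<Rightarrow> bool" where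
  "is_profile n Sig S \<longleftrightarrow> (\<forall>i<n. S i \<in> Sig i)"

definition load :: "nat \<Rightarrow> (nat \<Rightarrow> 'e set) \<Rightarrow> 'e \<Rightarrow> real" where
  "load n S e = real (card {i. i < n \<and> e \<in> S i})"

definition player_cost :: "nat \<Rightarrow> ('e \<Rightarrow> real) \<Rightarrow> ('e \<Rightarrow> real) \<Rightarrow> (nat \<Rightarrow> 'e set) \<Rightarrow> nat \<Rightarrow> real" where
  "player_cost n alpha beta S i = (\<Sum>e\<in>S i. alpha e * load n S e + beta e)"

definition max_cost :: "nat \<Rightarrow> ('e \<Rightarrow> real) \<Rightarrow> ('e \<Rightarrow> real) \<Rightarrow> (nat \<Rightarrow> 'e set) \<Rightarrow> real" where
  "max_cost n alpha beta S = Max ((player_cost n alpha beta S) ` {0..<n})"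

definition is_PNE :: "nat \<Rightarrow> (nat \<Rightarrow> 'e set set) \<Rightarrow> ('e \<Rightarrow> real) \<Rightarrow> ('e \<Rightarrow> real) \<Rightarrow> (nat \<Rightarrow> 'e set) \<Rightarrow> bool" where
  "is_PNE n Sig alpha beta S \<longleftrightarrow> is_profile n Sig S \<and>
     (\<forall>i<n. \<forall>t\<in>Sig i. player_cost n alpha beta S i \<le> player_cost n alpha beta (S(i := t)) i)"

end

theory Submission
  imports Defs
begin

(* Let S be a pure Nash equilibrium, S' any profile, L and L' their load vectors, and
   M = MAX(S').  The proof has two ingredients.
   (1) Total cost: unilateral deviation to S'_j costs player j at most
       sum over e in S'_j of alpha_e (L_e + 1) + beta_e.  Summing over j, double counting
       resources and the inequality L L' <= L^2/4 + L'^2 give SUM(S) <= 8/3 SUM(S') <= 8/3 n M;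
       in particular the "quadratic potential" sum_e alpha_e L_e^2 is at most 8/3 n M.
   (2) A single player i: by the deviation bound, c_i(S) <= sum_{e in S'_i} alpha_e L_e + M.
       Splitting alpha_e L_e <= t alpha_e + alpha_e L_e^2/(4t) with t = sqrt n bounds the first
       sum by t M + (8/3 n M)/(4t) = (1 + 2/3) sqrt n M.
   Hence MAX(S) <= 3 sqrt n MAX(S'). *)

lemma load_nonneg: "load n S e \<ge> 0"
  unfolding load_def by simp

lemma load_ge_one:
  assumes "j < n" "e \<in> S j"
  shows "load n S e \<ge> 1"
proof -
  have "j \<in> {i. i < n \<and> e \<in> S i}" using assms by auto
  then have "card {i. i < n \<and> e \<in> S i} > 0" by (subst card_gt_0_iff) auto
  then show ?thesis unfolding load_def by simp
qed

text \<open>Loads are natural numbers, hence bounded by their squares.\<close>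

lemma load_le_square: "load n S e \<le> load n S e * load n S e"
  unfolding load_def by (metis le_square of_nat_le_iff of_nat_mult)

lemma load_update_le: "load n (S(j := t)) e \<le> load n S e + 1"
proof -
  have "{i. i < n \<and> e \<in> (S(j := t)) i} \<subseteq> insert j {i. i < n \<and> e \<in> S i}" by auto
  then have "card {i. i < n \<and> e \<in> (S(j := t)) i} \<le> card (insert j {i. i < n \<and> e \<in> S i})"
    by (intro card_mono) auto
  also have "\<dots> \<le> card {i. i < n \<and> e \<in> S i} + 1" by (simp add: card_insert_if)
  finally show ?thesis unfolding load_def by simp
qed

lemma sum_over_strategies_eq_load_weighted:
  assumes "finite E" "\<forall>j<n. S j \<subseteq> E"
  shows "(\<Sum>j<n. \<Sum>e\<in>S j. f e) = (\<Sum>e\<in>E. f e * load n S e)"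
proof -
  have "(\<Sum>j<n. \<Sum>e\<in>S j. f e) = (\<Sum>j<n. \<Sum>e\<in>E. if e \<in> S j then f e else 0)"
  proof (rule sum.cong[OF refl])
    fix j assume "j \<in> {..<n}"
    then have "E \<inter> S j = S j" using assms by auto
    then show "(\<Sum>e\<in>S j. f e) = (\<Sum>e\<in>E. if e \<in> S j then f e else 0)"
      using sum.inter_restrict[OF assms(1), of f "S j"] by simp
  qed
  also have "\<dots> = (\<Sum>e\<in>E. \<Sum>j<n. if e \<in> S j then f e else 0)" by (rule sum.swap)
  also have "\<dots> = (\<Sum>e\<in>E. f e * load n S e)"
  proof (rule sum.cong[OF refl])
    fix e
    have "(\<Sum>j<n. if e \<in> S j then f e else 0) = (\<Sum>j\<in>{..<n} \<inter> {j. e \<in> S j}. f e)"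
      using sum.inter_restrict[of "{..<n}" "\<lambda>_. f e" "{j. e \<in> S j}"] by simp
    also have "{..<n} \<inter> {j. e \<in> S j} = {j. j < n \<and> e \<in> S j}" by auto
    finally show "(\<Sum>j<n. if e \<in> S j then f e else 0) = f e * load n S e"
      unfolding load_def by simp
  qed
  finally show ?thesis .
qed

definition total_cost :: "nat \<Rightarrow> ('e \<Rightarrow> real) \<Rightarrow> ('e \<Rightarrow> real) \<Rightarrow> (nat \<Rightarrow> 'e set) \<Rightarrow> real" where
  "total_cost n alpha beta S = (\<Sum>j<n. player_cost n alpha beta S j)"

lemma total_cost_by_resources:
  assumes "finite E" "\<forall>j<n. S j \<subseteq> E"
  shows "total_cost n alpha beta S
           = (\<Sum>e\<in>E. (alpha e * load n S e + beta e) * load n S e)"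
  unfolding total_cost_def player_cost_def
  by (rule sum_over_strategies_eq_load_weighted[OF assms])

lemma total_cost_le_max_cost: "total_cost n alpha beta S \<le> n * max_cost n alpha beta S"
proof -
  have "total_cost n alpha beta S \<le> (\<Sum>j<n. max_cost n alpha beta S)"
    unfolding total_cost_def max_cost_def by (intro sum_mono Max_ge) auto
  then show ?thesis by simp
qed

lemma player_cost_le_max_cost: "i < n \<Longrightarrow> player_cost n alpha beta S i \<le> max_cost n alpha beta S"
  unfolding max_cost_def by (intro Max_ge) auto

lemma valid_game_profile_subset:
  "valid_game n E Sig alpha beta \<Longrightarrow> is_profile n Sig S \<Longrightarrow> \<forall>j<n. S j \<subseteq> E"
  unfolding valid_game_def is_profile_def by blast

lemma valid_game_coeffs_nonneg:
  "valid_game n E Sig alpha beta \<Longrightarrow> e \<in> E \<Longrightarrow> alpha e \<ge> 0 \<and> beta e \<ge> 0"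
  unfolding valid_game_def by auto

text \<open>Nash condition against the deviation to \<open>S' j\<close>: the deviator sees each load raised by
  at most one.\<close>

lemma pne_deviation_bound:
  assumes vg: "valid_game n E Sig alpha beta" and pne: "is_PNE n Sig alpha beta S"
    and prof: "is_profile n Sig S'" and j: "j < n"
  shows "player_cost n alpha beta S j \<le> (\<Sum>e\<in>S' j. alpha e * (load n S e + 1) + beta e)"
proof -
  have "S' j \<in> Sig j" using prof j unfolding is_profile_def by auto
  then have "player_cost n alpha beta S j \<le> player_cost n alpha beta (S(j := S' j)) j"
    using pne j unfolding is_PNE_def by auto
  also have "\<dots> = (\<Sum>e\<in>S' j. alpha e * load n (S(j := S' j)) e + beta e)"
    unfolding player_cost_def by simp
  also have "\<dots> \<le> (\<Sum>e\<in>S' j. alpha e * (load n S e + 1) + beta e)"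
  proof (rule sum_mono)
    fix e assume "e \<in> S' j"
    then have "alpha e \<ge> 0"
      using valid_game_profile_subset[OF vg prof] valid_game_coeffs_nonneg[OF vg] j by auto
    then show "alpha e * load n (S(j := S' j)) e + beta e \<le> alpha e * (load n S e + 1) + beta e"
      using load_update_le[of n S j "S' j" e] by (simp add: mult_left_mono)
  qed
  finally show ?thesis .
qed

text \<open>It uses \<open>x y \<le> x\<^sup>2/4 + y\<^sup>2\<close> and \<open>y \<le> y\<^sup>2\<close> for integral loads.\<close>

lemma resource_smoothness:
  fixes a b x y :: real
  assumes "a \<ge> 0" "b \<ge> 0" "x \<ge> 0" "y \<ge> 0" "y \<le> y * y"
  shows "(a * (x + 1) + b) * y \<le> 1/4 * ((a * x + b) * x) + 2 * ((a * y + b) * y)"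
proof -
  have "x * y \<le> x * x / 4 + y * y"
    using zero_le_power2[of "x / 2 - y"] by (simp add: power2_eq_square algebra_simps)
  then have "a * (x * y) \<le> a * (x * x / 4 + y * y)" using assms(1) by (rule mult_left_mono)
  moreover have "a * y \<le> a * (y * y)" using assms(5,1) by (rule mult_left_mono)
  moreover have "b * y \<ge> 0" "b * x \<ge> 0" using assms by auto
  ultimately show ?thesis by (simp add: algebra_simps)
qed

lemma pne_total_cost_bound:
  assumes vg: "valid_game n E Sig alpha beta" and pne: "is_PNE n Sig alpha beta S"
    and prof: "is_profile n Sig S'"
  shows "total_cost n alpha beta S \<le> 8/3 * total_cost n alpha beta S'"
proof -
  define L where "L = load n S"
  define L' where "L' = load n S'"
  have finE: "finite E" using vg unfolding valid_game_def by auto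
  have SE: "\<forall>j<n. S j \<subseteq> E"
    using pne valid_game_profile_subset[OF vg] unfolding is_PNE_def by blast
  have S'E: "\<forall>j<n. S' j \<subseteq> E" using valid_game_profile_subset[OF vg prof] .
  have "total_cost n alpha beta S \<le> (\<Sum>j<n. \<Sum>e\<in>S' j. alpha e * (L e + 1) + beta e)"
    unfolding total_cost_def L_def using pne_deviation_bound[OF vg pne prof] by (intro sum_mono) auto
  also have "\<dots> = (\<Sum>e\<in>E. (alpha e * (L e + 1) + beta e) * L' e)"
    unfolding L'_def by (rule sum_over_strategies_eq_load_weighted[OF finE S'E])
  also have "\<dots> \<le> (\<Sum>e\<in>E. 1/4 * ((alpha e * L e + beta e) * L e)
                           + 2 * ((alpha e * L' e + beta e) * L' e))"
    unfolding L_def L'_def using valid_game_coeffs_nonneg[OF vg]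
    by (intro sum_mono resource_smoothness) (auto simp: load_nonneg load_le_square)
  also have "\<dots> = 1/4 * total_cost n alpha beta S + 2 * total_cost n alpha beta S'"
    unfolding total_cost_by_resources[OF finE SE] total_cost_by_resources[OF finE S'E] L_def L'_def
    by (simp add: sum.distrib sum_distrib_left)
  finally show ?thesis by simp
qed

text \<open>The quadratic part of the total cost, which controls the heavy resources of any
  single strategy.\<close>

lemma quadratic_load_le_total_cost:
  assumes vg: "valid_game n E Sig alpha beta" and prof: "is_profile n Sig S"
  shows "(\<Sum>e\<in>E. alpha e * (load n S e * load n S e)) \<le> total_cost n alpha beta S"
proof -
  have "finite E" using vg unfolding valid_game_def by auto
  have "(\<Sum>e\<in>E. alpha e * (load n S e * load n S e))
          \<le> (\<Sum>e\<in>E. (alpha e * load n S e + beta e) * load n S e)"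
  proof (rule sum_mono)
    fix e assume "e \<in> E"
    then have "beta e * load n S e \<ge> 0"
      using valid_game_coeffs_nonneg[OF vg] load_nonneg[of n S e] by (simp add: mult_nonneg_nonneg)
    then show "alpha e * (load n S e * load n S e) \<le> (alpha e * load n S e + beta e) * load n S e"
      by (simp add: algebra_simps)
  qed
  then show ?thesis
    using total_cost_by_resources[OF \<open>finite E\<close> valid_game_profile_subset[OF vg prof]] by simp
qed

text \<open>Every resource of \<open>S' i\<close> has load at least one under \<open>S'\<close>, so the latency coefficients
  along \<open>S' i\<close> sum to at most \<open>c_i(S') \<le> MAX(S')\<close>.\<close>

lemma strategy_coeffs_le_max_cost:
  assumes vg: "valid_game n E Sig alpha beta" and prof: "is_profile n Sig S'" and i: "i < n"
  shows "(\<Sum>e\<in>S' i. alpha e + beta e) \<le> max_cost n alpha beta S'"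
proof -
  have "(\<Sum>e\<in>S' i. alpha e + beta e) \<le> (\<Sum>e\<in>S' i. alpha e * load n S' e + beta e)"
  proof (rule sum_mono)
    fix e assume e: "e \<in> S' i"
    have "alpha e \<ge> 0"
      using e i valid_game_profile_subset[OF vg prof] valid_game_coeffs_nonneg[OF vg] by auto
    then show "alpha e + beta e \<le> alpha e * load n S' e + beta e"
      using mult_left_mono[OF load_ge_one[of i n e S', OF i e]] by simp
  qed
  also have "\<dots> \<le> max_cost n alpha beta S'"
    using player_cost_le_max_cost[OF i] unfolding player_cost_def .
  finally show ?thesis .
qed

lemma linear_le_const_plus_quadratic:
  fixes x t :: real
  assumes "t > 0"
  shows "x \<le> t + x * x / (4 * t)"
proof -
  have "4 * t * x \<le> x * x + 4 * (t * t)"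
    using zero_le_power2[of "x - 2 * t"] by (simp add: power2_eq_square algebra_simps)
  then show ?thesis using assms by (simp add: field_simps)
qed

lemma pne_player_cost_bound:
  assumes n: "n \<ge> 1" and vg: "valid_game n E Sig alpha beta"
    and pne: "is_PNE n Sig alpha beta S" and prof: "is_profile n Sig S'" and i: "i < n"
  shows "player_cost n alpha beta S i \<le> 3 * sqrt n * max_cost n alpha beta S'"
proof -
  define L where "L = load n S"
  define M where "M = max_cost n alpha beta S'"
  define t where "t = sqrt n"
  have t1: "t \<ge> 1" unfolding t_def using n by simp
  have S'iE: "S' i \<subseteq> E" using valid_game_profile_subset[OF vg prof] i by auto
  have finE: "finite E" using vg unfolding valid_game_def by auto
  have coeffs: "alpha e \<ge> 0" "beta e \<ge> 0" if "e \<in> S' i" for e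
    using that S'iE valid_game_coeffs_nonneg[OF vg] by auto
  have coeffs_le: "(\<Sum>e\<in>S' i. alpha e + beta e) \<le> M"
    unfolding M_def by (rule strategy_coeffs_le_max_cost[OF vg prof i])
  have alpha_le: "(\<Sum>e\<in>S' i. alpha e) \<le> M"
    using coeffs_le sum_mono[of "S' i" alpha "\<lambda>e. alpha e + beta e"] coeffs(2) by force
  have M0: "M \<ge> 0" using alpha_le sum_nonneg[of "S' i" alpha] coeffs(1) by force
  have quad_le: "(\<Sum>e\<in>S' i. alpha e * (L e * L e)) \<le> 8/3 * (n * M)"
  proof -
    have "(\<Sum>e\<in>S' i. alpha e * (L e * L e)) \<le> (\<Sum>e\<in>E. alpha e * (L e * L e))"
      using finE S'iE valid_game_coeffs_nonneg[OF vg] by (intro sum_mono2) auto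
    also have "\<dots> \<le> total_cost n alpha beta S"
      unfolding L_def using pne by (intro quadratic_load_le_total_cost[OF vg]) (simp add: is_PNE_def)
    also have "\<dots> \<le> 8/3 * total_cost n alpha beta S'" by (rule pne_total_cost_bound[OF vg pne prof])
    also have "\<dots> \<le> 8/3 * (n * M)" unfolding M_def using total_cost_le_max_cost by simp
    finally show ?thesis .
  qed
  have "(\<Sum>e\<in>S' i. alpha e * L e) \<le> (\<Sum>e\<in>S' i. t * alpha e + alpha e * (L e * L e) / (4 * t))"
  proof (rule sum_mono)
    fix e assume "e \<in> S' i"
    then have "alpha e * L e \<le> alpha e * (t + L e * L e / (4 * t))"
      using coeffs(1) linear_le_const_plus_quadratic t1 by (intro mult_left_mono) auto
    then show "alpha e * L e \<le> t * alpha e + alpha e * (L e * L e) / (4 * t)"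
      by (simp add: algebra_simps)
  qed
  also have "\<dots> = t * (\<Sum>e\<in>S' i. alpha e) + (\<Sum>e\<in>S' i. alpha e * (L e * L e)) / (4 * t)"
    by (simp add: sum.distrib sum_distrib_left sum_divide_distrib)
  also have "\<dots> \<le> t * M + 8/3 * (n * M) / (4 * t)"
    using alpha_le quad_le t1 by (intro add_mono mult_left_mono divide_right_mono) auto
  also have "\<dots> = 5/3 * t * M" using t1 by (simp add: t_def field_simps)
  finally have heavy: "(\<Sum>e\<in>S' i. alpha e * L e) \<le> 5/3 * t * M" .
  have "player_cost n alpha beta S i \<le> (\<Sum>e\<in>S' i. alpha e * L e) + (\<Sum>e\<in>S' i. alpha e + beta e)"
    using pne_deviation_bound[OF vg pne prof i] by (simp add: L_def sum.distrib algebra_simps)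
  also have "\<dots> \<le> 5/3 * t * M + M" using heavy coeffs_le by linarith
  also have "\<dots> \<le> 3 * t * M" using t1 M0 mult_right_mono[of 1 t M] by linarith
  finally show ?thesis unfolding t_def M_def .
qed

theorem mainTheorem14:
  "\<exists>C>0. \<forall>(n::nat) (E::nat set) Sig alpha beta S S'.
     n \<ge> 1 \<longrightarrow> valid_game n E Sig alpha beta \<longrightarrow>
     is_PNE n Sig alpha beta S \<longrightarrow> is_profile n Sig S' \<longrightarrow>
     max_cost n alpha beta S \<le> C * sqrt (real n) * max_cost n alpha beta S'"
proof (intro exI[of _ 3] conjI allI impI)
  fix n :: nat and E :: "nat set" and Sig alpha beta S S'
  assume h: "n \<ge> 1" "valid_game n E Sig alpha beta" "is_PNE n Sig alpha beta S"
    "is_profile n Sig S'"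
  show "max_cost n alpha beta S \<le> 3 * sqrt (real n) * max_cost n alpha beta S'"
    unfolding max_cost_def[of n alpha beta S]
    using h pne_player_cost_bound[OF h] by (intro Max.boundedI) auto
qed simp

end
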